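(* The following first-order theories do not have the amalgamation property: (a) the theory of an antisymmetric binary relation $S$ together with two partial orders $\le$ and $\le'$, both finer than $S$ (i.e. ${\le}\subseteq S$ and ${\le'}\subseteq S$); (b) the theory of an antisymmetric binary relation $S$ together with two transitive binary relations, both finer than $S$; (c) the theory of a partial order $\le$ together with a coarser antisymmetric binary relation $S$ (${\le}\subseteq S$) and a bijective unary operation $f$ which is $S$-preserving ($x\,S\,y$ implies $f(x)\,S\,f(y)$).
   Context: A theory has the amalgamation property (AP) if whenever $\mathbf{A},\mathbf{B},\mathbf{C}$ are models with $\mathbf{C}\subseteq\mathbf{A}$, $\mathbf{C}\subseteq\mathbf{B}$ and $C=A\cap B$, there are a model $\mathbf{D}$ and embeddings of $\mathbf{A}$ and $\mathbf{B}$ into $\mathbf{D}$ which agree on $C$. *)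

theory Defs
  imports Main
begin

record 'a str3 =
  car3 :: "'a set"
  relS :: "'a rel"
  rel1 :: "'a rel"
  rel2 :: "'a rel"

definition wf3 :: "'a str3 \<Rightarrow> bool" where
  "wf3 M \<longleftrightarrow> car3 M \<noteq> {} \<and> relS M \<subseteq> car3 M \<times> car3 M
     \<and> rel1 M \<subseteq> car3 M \<times> car3 M \<and> rel2 M \<subseteq> car3 M \<times> car3 M"

definition porder_on :: "'a set \<Rightarrow> 'a rel \<Rightarrow> bool" where
  "porder_on U R \<longleftrightarrow> R \<subseteq> U \<times> U \<and> (\<forall>x\<in>U. (x, x) \<in> R) \<and> trans R \<and> antisym R"

definition model_a :: "'a str3 \<Rightarrow> bool" where
  "model_a M \<longleftrightarrow> wf3 M \<and> antisym (relS M)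
     \<and> porder_on (car3 M) (rel1 M) \<and> porder_on (car3 M) (rel2 M)
     \<and> rel1 M \<subseteq> relS M \<and> rel2 M \<subseteq> relS M"

definition model_b :: "'a str3 \<Rightarrow> bool" where
  "model_b M \<longleftrightarrow> wf3 M \<and> antisym (relS M)
     \<and> trans (rel1 M) \<and> trans (rel2 M)
     \<and> rel1 M \<subseteq> relS M \<and> rel2 M \<subseteq> relS M"

definition sub3 :: "'a str3 \<Rightarrow> 'a str3 \<Rightarrow> bool" where
  "sub3 C A \<longleftrightarrow> car3 C \<subseteq> car3 A
     \<and> relS C = relS A \<inter> (car3 C \<times> car3 C)
     \<and> rel1 C = rel1 A \<inter> (car3 C \<times> car3 C)
     \<and> rel2 C = rel2 A \<inter> (car3 C \<times> car3 C)"

definition emb3 :: "('a \<Rightarrow> 'd) \<Rightarrow> 'a str3 \<Rightarrow> 'd str3 \<Rightarrow> bool" where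
  "emb3 h A D \<longleftrightarrow> h ` car3 A \<subseteq> car3 D \<and> inj_on h (car3 A)
     \<and> (\<forall>x\<in>car3 A. \<forall>y\<in>car3 A.
          ((x, y) \<in> relS A \<longleftrightarrow> (h x, h y) \<in> relS D)
        \<and> ((x, y) \<in> rel1 A \<longleftrightarrow> (h x, h y) \<in> rel1 D)
        \<and> ((x, y) \<in> rel2 A \<longleftrightarrow> (h x, h y) \<in> rel2 D))"

definition AP3 :: "('a str3 \<Rightarrow> bool) \<Rightarrow> ('d str3 \<Rightarrow> bool) \<Rightarrow> bool" where
  "AP3 M MD \<longleftrightarrow> (\<forall>A B C. M A \<and> M B \<and> M C \<and> sub3 C A \<and> sub3 C B
      \<and> car3 C = car3 A \<inter> car3 B \<longrightarrow>
      (\<exists>D g h. MD D \<and> emb3 g A D \<and> emb3 h B D \<and> (\<forall>x\<in>car3 C. g x = h x)))"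

record 'a strc =
  carc :: "'a set"
  leq :: "'a rel"
  relSc :: "'a rel"
  fun_f :: "'a \<Rightarrow> 'a"

definition model_c :: "'a strc \<Rightarrow> bool" where
  "model_c M \<longleftrightarrow> carc M \<noteq> {} \<and> relSc M \<subseteq> carc M \<times> carc M
     \<and> porder_on (carc M) (leq M) \<and> antisym (relSc M) \<and> leq M \<subseteq> relSc M
     \<and> bij_betw (fun_f M) (carc M) (carc M)
     \<and> (\<forall>x y. (x, y) \<in> relSc M \<longrightarrow> (fun_f M x, fun_f M y) \<in> relSc M)"

definition subc :: "'a strc \<Rightarrow> 'a strc \<Rightarrow> bool" where
  "subc C A \<longleftrightarrow> carc C \<subseteq> carc A
     \<and> leq C = leq A \<inter> (carc C \<times> carc C)
     \<and> relSc C = relSc A \<inter> (carc C \<times> carc C)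
     \<and> (\<forall>x\<in>carc C. fun_f C x = fun_f A x)"

definition embc :: "('a \<Rightarrow> 'd) \<Rightarrow> 'a strc \<Rightarrow> 'd strc \<Rightarrow> bool" where
  "embc h A D \<longleftrightarrow> h ` carc A \<subseteq> carc D \<and> inj_on h (carc A)
     \<and> (\<forall>x\<in>carc A. \<forall>y\<in>carc A.
          ((x, y) \<in> leq A \<longleftrightarrow> (h x, h y) \<in> leq D)
        \<and> ((x, y) \<in> relSc A \<longleftrightarrow> (h x, h y) \<in> relSc D))
     \<and> (\<forall>x\<in>carc A. h (fun_f A x) = fun_f D (h x))"

definition APc :: "('a strc \<Rightarrow> bool) \<Rightarrow> ('d strc \<Rightarrow> bool) \<Rightarrow> bool" where
  "APc M MD \<longleftrightarrow> (\<forall>A B C. M A \<and> M B \<and> M C \<and> subc C A \<and> subc C B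
      \<and> carc C = carc A \<inter> carc B \<longrightarrow>
      (\<exists>D g h. MD D \<and> embc g A D \<and> embc h B D \<and> (\<forall>x\<in>carc C. g x = h x)))"

end

theory Submission
  imports Defs "HOL-Combinatorics.Transposition"
begin

text \<open>All three counterexamples amalgamate over the discrete base \<open>{0, 1}\<close>. One side adds a
  point \<open>a\<close> with \<open>a \<le> 0\<close> and \<open>1 \<le>' a\<close>, the other a point \<open>b\<close> with \<open>0 \<le> b\<close> and
  \<open>b \<le>' 1\<close>. In an amalgam transitivity gives \<open>a \<le> b\<close> and \<open>b \<le>' a\<close>, hence \<open>a S b\<close> and
  \<open>b S a\<close>, so \<open>a = b\<close>; then \<open>a \<le> 0 \<le> a\<close> identifies \<open>a\<close> with \<open>0\<close>, contradicting injectivity.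
  In (c) there is only one order, and \<open>\<le>'\<close> is simulated through \<open>f\<close>: \<open>f\<close> swaps \<open>a\<close> and
  \<open>b\<close> with partner points \<open>a'\<close>, \<open>b'\<close> such that \<open>1 \<le> a'\<close> and \<open>b' \<le> 1\<close>, so
  \<open>b' S a'\<close> and applying \<open>f\<close> yields \<open>b S a\<close>.\<close>

lemma not_AP3I:
  assumes "M A" "M B" "M C" "sub3 C A" "sub3 C B" "car3 C = car3 A \<inter> car3 B"
    and "\<And>D g h. MD D \<Longrightarrow> emb3 g A D \<Longrightarrow> emb3 h B D \<Longrightarrow> \<forall>x\<in>car3 C. g x = h x \<Longrightarrow> False"
  shows "\<not> AP3 M MD"
  using assms unfolding AP3_def by blast

lemma not_APcI:
  assumes "M A" "M B" "M C" "subc C A" "subc C B" "carc C = carc A \<inter> carc B"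
    and "\<And>D g h. MD D \<Longrightarrow> embc g A D \<Longrightarrow> embc h B D \<Longrightarrow> \<forall>x\<in>carc C. g x = h x \<Longrightarrow> False"
  shows "\<not> APc M MD"
  using assms unfolding APc_def by blast

lemma emb3_rel1D: "emb3 h A D \<Longrightarrow> (x, y) \<in> rel1 A \<Longrightarrow> x \<in> car3 A \<Longrightarrow> y \<in> car3 A
    \<Longrightarrow> (h x, h y) \<in> rel1 D"
  unfolding emb3_def by blast

lemma emb3_rel2D: "emb3 h A D \<Longrightarrow> (x, y) \<in> rel2 A \<Longrightarrow> x \<in> car3 A \<Longrightarrow> y \<in> car3 A
    \<Longrightarrow> (h x, h y) \<in> rel2 D"
  unfolding emb3_def by blast

lemma embc_leqD: "embc h A D \<Longrightarrow> (x, y) \<in> leq A \<Longrightarrow> x \<in> carc A \<Longrightarrow> y \<in> carc A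
    \<Longrightarrow> (h x, h y) \<in> leq D"
  unfolding embc_def by blast

lemma embc_fun_f: "embc h A D \<Longrightarrow> x \<in> carc A \<Longrightarrow> h (fun_f A x) = fun_f D (h x)"
  unfolding embc_def by blast

lemma model_a_imp_model_b: "model_a M \<Longrightarrow> model_b M"
  unfolding model_a_def model_b_def porder_on_def by blast

lemma trans_subrels_of_antisym_cycle_eq:
  assumes "antisym S" "trans R" "trans R'" "R \<subseteq> S" "R' \<subseteq> S"
    and "(x, z) \<in> R" "(z, y) \<in> R" "(y, w) \<in> R'" "(w, x) \<in> R'"
  shows "x = y"
proof -
  have "(x, y) \<in> S" using assms(2,4,6,7) by (meson subsetD transD)
  moreover have "(y, x) \<in> S" using assms(3,5,8,9) by (meson subsetD transD)
  ultimately show ?thesis by (rule antisymD[OF assms(1)])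
qed

definition base3 :: "nat str3" where
  "base3 = \<lparr>car3 = {0,1}, relS = Id_on {0,1}, rel1 = Id_on {0,1}, rel2 = Id_on {0,1}\<rparr>"

definition left3 :: "nat str3" where
  "left3 = \<lparr>car3 = {0,1,2}, relS = Id_on {0,1,2} \<union> {(2,0),(1,2)},
         rel1 = Id_on {0,1,2} \<union> {(2,0)}, rel2 = Id_on {0,1,2} \<union> {(1,2)}\<rparr>"

definition right3 :: "nat str3" where
  "right3 = \<lparr>car3 = {0,1,3}, relS = Id_on {0,1,3} \<union> {(0,3),(3,1)},
         rel1 = Id_on {0,1,3} \<union> {(0,3)}, rel2 = Id_on {0,1,3} \<union> {(3,1)}\<rparr>"

lemma sub3_base3:
  "sub3 base3 left3" "sub3 base3 right3" "car3 base3 = car3 left3 \<inter> car3 right3"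
  by (auto simp: sub3_def left3_def right3_def base3_def)

lemma model_a_base3_left3_right3: "model_a base3" "model_a left3" "model_a right3"
  by (auto simp: model_a_def wf3_def porder_on_def trans_def antisym_def
      left3_def right3_def base3_def)

lemma no_model_b_amalgam_left3_right3:
  assumes D: "model_b D" and g: "emb3 g left3 D" and h: "emb3 h right3 D"
    and gh: "\<forall>x\<in>car3 base3. g x = h x"
  shows False
proof -
  have S: "antisym (relS D)" and R: "trans (rel1 D)" "trans (rel2 D)"
    and RS: "rel1 D \<subseteq> relS D" "rel2 D \<subseteq> relS D"
    using D unfolding model_b_def by blast+
  have base: "g 0 = h 0" "g 1 = h 1" using gh by (auto simp: base3_def)
  have a: "(g 2, g 0) \<in> rel1 D" "(g 1, g 2) \<in> rel2 D"
    by (auto intro: emb3_rel1D[OF g] emb3_rel2D[OF g] simp: left3_def)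
  have b: "(h 0, h 3) \<in> rel1 D" "(h 3, h 1) \<in> rel2 D"
    by (auto intro: emb3_rel1D[OF h] emb3_rel2D[OF h] simp: right3_def)
  have "g 2 = h 3"
    using trans_subrels_of_antisym_cycle_eq[OF S R RS] a b base by simp
  then have "(g 0, g 2) \<in> relS D" using b(1) base RS(1) by auto
  then have "g 0 = g 2" using a(1) RS(1) S by (auto dest: antisymD)
  moreover have "inj_on g (car3 left3)" using g unfolding emb3_def by blast
  ultimately show False by (auto dest: inj_onD simp: left3_def)
qed

lemma not_AP3_model_a: "\<not> AP3 (model_a :: nat str3 \<Rightarrow> bool) (model_a :: 'd str3 \<Rightarrow> bool)"
  by (rule not_AP3I[OF model_a_base3_left3_right3(2,3,1) sub3_base3
        no_model_b_amalgam_left3_right3[OF model_a_imp_model_b]])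

lemma not_AP3_model_b: "\<not> AP3 (model_b :: nat str3 \<Rightarrow> bool) (model_b :: 'd str3 \<Rightarrow> bool)"
  by (rule not_AP3I[OF model_a_base3_left3_right3(2,3,1)[THEN model_a_imp_model_b] sub3_base3
        no_model_b_amalgam_left3_right3])

definition basec :: "nat strc" where
  "basec = \<lparr>carc = {0,1}, leq = Id_on {0,1}, relSc = Id_on {0,1}, fun_f = id\<rparr>"

definition leftc :: "nat strc" where
  "leftc = \<lparr>carc = {0,1,2,3}, leq = Id_on {0,1,2,3} \<union> {(2,0),(1,3)},
         relSc = Id_on {0,1,2,3} \<union> {(2,0),(3,0),(1,3),(1,2)},
         fun_f = Transposition.transpose 2 3\<rparr>"

definition rightc :: "nat strc" where
  "rightc = \<lparr>carc = {0,1,4,5}, leq = Id_on {0,1,4,5} \<union> {(0,4),(5,1)},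
         relSc = Id_on {0,1,4,5} \<union> {(0,4),(0,5),(5,1),(4,1)},
         fun_f = Transposition.transpose 4 5\<rparr>"

lemma subc_basec:
  "subc basec leftc" "subc basec rightc" "carc basec = carc leftc \<inter> carc rightc"
  by (auto simp: subc_def leftc_def rightc_def basec_def)

lemma model_c_basec_leftc_rightc: "model_c basec" "model_c leftc" "model_c rightc"
  unfolding model_c_def
  by (intro conjI allI impI; auto simp: porder_on_def trans_def antisym_def
      leftc_def rightc_def basec_def)+

lemma no_model_c_amalgam_leftc_rightc:
  assumes D: "model_c D" and g: "embc g leftc D" and h: "embc h rightc D"
    and gh: "\<forall>x\<in>carc basec. g x = h x"
  shows False
proof -
  have le: "trans (leq D)" "antisym (leq D)" and S: "antisym (relSc D)"
    and le_S: "leq D \<subseteq> relSc D"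
    and f_S: "\<And>x y. (x, y) \<in> relSc D \<Longrightarrow> (fun_f D x, fun_f D y) \<in> relSc D"
    using D unfolding model_c_def porder_on_def by blast+
  have base: "g 0 = h 0" "g 1 = h 1" using gh by (auto simp: basec_def)
  have a: "(g 2, g 0) \<in> leq D" "(g 1, g 3) \<in> leq D" "fun_f D (g 3) = g 2"
    using embc_leqD[OF g, of 2 0] embc_leqD[OF g, of 1 3] embc_fun_f[OF g, of 3]
    by (simp_all add: leftc_def)
  have b: "(h 0, h 4) \<in> leq D" "(h 5, h 1) \<in> leq D" "fun_f D (h 5) = h 4"
    using embc_leqD[OF h, of 0 4] embc_leqD[OF h, of 5 1] embc_fun_f[OF h, of 5]
    by (simp_all add: rightc_def)
  have "(g 2, h 4) \<in> leq D" using a(1) b(1) base by (auto intro: transD[OF le(1)])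
  then have "(g 2, h 4) \<in> relSc D" using le_S by blast
  moreover have "(h 5, g 3) \<in> leq D" using a(2) b(2) base by (auto intro: transD[OF le(1)])
  then have "(h 4, g 2) \<in> relSc D" using le_S f_S[of "h 5" "g 3"] a(3) b(3) by auto
  ultimately have "g 2 = h 4" by (rule antisymD[OF S])
  then have "g 0 = g 2" using a(1) b(1) base by (auto intro: antisymD[OF le(2)])
  moreover have "inj_on g (carc leftc)" using g unfolding embc_def by blast
  ultimately show False by (auto dest: inj_onD simp: leftc_def)
qed

lemma not_APc_model_c: "\<not> APc (model_c :: nat strc \<Rightarrow> bool) (model_c :: 'd strc \<Rightarrow> bool)"
  by (rule not_APcI[OF model_c_basec_leftc_rightc(2,3,1) subc_basec
        no_model_c_amalgam_leftc_rightc])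

theorem proposition3p5:
  shows "\<not> AP3 (model_a :: nat str3 \<Rightarrow> bool) (model_a :: 'd str3 \<Rightarrow> bool)
       \<and> \<not> AP3 (model_b :: nat str3 \<Rightarrow> bool) (model_b :: 'd str3 \<Rightarrow> bool)
       \<and> \<not> APc (model_c :: nat strc \<Rightarrow> bool) (model_c :: 'd strc \<Rightarrow> bool)"
  using not_AP3_model_a not_AP3_model_b not_APc_model_c by blast

end
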